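(* Let $\beta=(\beta_j)_{j\ge0}$ be a sequence of positive numbers (or independent variables), let $\xi_{nk}=\xi_{nk}(\beta)$ be the Stirling polynomials of the second kind generated by $\beta$, and let $\xi^{(1)}_{nk}=\xi_{nk}(\beta^{(1)})$ where $\beta^{(1)}=(\beta_{1+j})_{j\ge0}$. For all $n\ge1$ and $0\le k\le n$, $$\xi_{nk}=\xi^{(1)}_{n-1,k-1}+\xi_{n-1,k}\,\beta_0 .$$
   Context: For a sequence $b=(b_j)_{j\ge0}$ and $\omega=(\varepsilon_1,\dots,\varepsilon_n)\in\{0,1\}^n$ define the weight $w_n(\omega)=\prod_{m=1}^n g_m$, where $g_m=1$ if $\varepsilon_m=0$ and $g_m=b_j$ if $\varepsilon_m=1$, with $j=\#\{l:1\le l\le m-1,\ \varepsilon_l=0\}$. For $n\ge1$, $0\le k\le n$, $\xi_{nk}(b)=\sum w_n(\omega)$ over all $\omega\in\{0,1\}^n$ with exactly $k$ zeros; $\xi_{00}(b)=1$ and $\xi_{nk}(b)=0$ if $k<0$ or $k>n$. *)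

theory Defs
  imports Complex_Main
begin

definition zeros :: "nat list \<Rightarrow> nat" where
  "zeros xs = length (filter (\<lambda>e. e = 0) xs)"

definition weight :: "(nat \<Rightarrow> real) \<Rightarrow> nat list \<Rightarrow> real" where
  "weight b xs = (\<Prod>m<length xs. (if xs ! m = 0 then 1 else b (zeros (take m xs))))"

text \<open>Stirling polynomials of the second kind xi_{nk}(b); k is an integer so that
  xi_{nk} = 0 for k < 0 (and for k > n the index set is empty).\<close>

definition xi :: "(nat \<Rightarrow> real) \<Rightarrow> nat \<Rightarrow> int \<Rightarrow> real" where
  "xi b n k = (\<Sum>xs\<in>{xs. length xs = n \<and> set xs \<subseteq> {0,1} \<and> int (zeros xs) = k}. weight b xs)"

end

theory Submission
  imports Defs
begin

text \<open>Split the words of length n+1 by their first letter. A leading 0 contributes the factor 1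
  and shifts the zero count of every later prefix by one, so the rest of the word is weighted by
  the shifted sequence; a leading 1 contributes b 0 and leaves the later factors unchanged.\<close>

definition binary_words :: "nat \<Rightarrow> int \<Rightarrow> nat list set" where
  "binary_words n k = {xs. length xs = n \<and> set xs \<subseteq> {0,1} \<and> int (zeros xs) = k}"

lemma finite_binary_words: "finite (binary_words n k)"
proof -
  have "binary_words n k \<subseteq> {xs. set xs \<subseteq> {0,1} \<and> length xs = n}"
    by (auto simp: binary_words_def)
  thus ?thesis using finite_lists_length_eq[of "{0::nat,1}" n] finite_subset by blast
qed

lemma xi_eq_sum_binary_words: "xi b n k = sum (weight b) (binary_words n k)"
  by (simp add: xi_def binary_words_def)

lemma zeros_Nil [simp]: "zeros [] = 0"
  by (simp add: zeros_def)

lemma zeros_Cons [simp]: "zeros (x # xs) = (if x = 0 then Suc (zeros xs) else zeros xs)"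
  by (simp add: zeros_def)

lemma weight_Cons:
  "weight b (x # xs) = (if x = 0 then weight (\<lambda>j. b (1 + j)) xs else b 0 * weight b xs)"
  by (simp add: weight_def prod.lessThan_Suc_shift del: prod.lessThan_Suc cong: if_cong)

lemma binary_words_Suc:
  "binary_words (Suc m) k = Cons 0 ` binary_words m (k - 1) \<union> Cons 1 ` binary_words m k"
proof (rule set_eqI)
  fix xs
  show "xs \<in> binary_words (Suc m) k \<longleftrightarrow>
        xs \<in> Cons 0 ` binary_words m (k - 1) \<union> Cons 1 ` binary_words m k"
  proof
    assume "xs \<in> binary_words (Suc m) k"
    then obtain y ys where "xs = y # ys" "y \<in> {0,1}"
      and "ys \<in> binary_words m (if y = 0 then k - 1 else k)"
      by (cases xs) (auto simp: binary_words_def)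
    thus "xs \<in> Cons 0 ` binary_words m (k - 1) \<union> Cons 1 ` binary_words m k"
      by auto
  qed (auto simp: binary_words_def)
qed

lemma xi_Suc: "xi b (Suc m) k = xi (\<lambda>j. b (1 + j)) m (k - 1) + xi b m k * b 0"
proof -
  have "xi b (Suc m) k =
        sum (weight b) (Cons 0 ` binary_words m (k - 1)) + sum (weight b) (Cons 1 ` binary_words m k)"
    unfolding xi_eq_sum_binary_words binary_words_Suc
    by (rule sum.union_disjoint) (auto simp: finite_binary_words)
  also have "sum (weight b) (Cons 0 ` binary_words m (k - 1)) = xi (\<lambda>j. b (1 + j)) m (k - 1)"
    by (simp add: sum.reindex xi_eq_sum_binary_words weight_Cons)
  also have "sum (weight b) (Cons 1 ` binary_words m k) = xi b m k * b 0"
    by (simp add: sum.reindex xi_eq_sum_binary_words weight_Cons sum_distrib_left mult.commute)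
  finally show ?thesis .
qed

text \<open>The recurrence holds for every sequence and every k.\<close>

theorem theorem4p2:
  fixes \<beta> :: "nat \<Rightarrow> real" and n :: nat and k :: int
  assumes "\<And>j. \<beta> j > 0"
    and "n \<ge> 1" and "0 \<le> k" and "k \<le> int n"
  shows "xi \<beta> n k = xi (\<lambda>j. \<beta> (1 + j)) (n - 1) (k - 1) + xi \<beta> (n - 1) k * \<beta> 0"
proof -
  obtain m where "n = Suc m" using \<open>n \<ge> 1\<close> by (cases n) auto
  thus ?thesis by (simp only: xi_Suc diff_Suc_1)
qed

end
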